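(* Let $I$ be a resident-minimal and hospital-complete instance and suppose there is a prescription $(P,X)$ for $I$. Then there is a simple extension $J$ of $I$ such that $\mathrm{prop}(J)\setminus\mathrm{prop}(I)\subseteq P$, $\mathrm{rej}(J)\setminus\mathrm{rej}(I)\subseteq X$, and $\mathrm{tgs}(P,X)\subseteq\mathrm{rej}(J)$.
   Context: An instance $I$ consists of finite disjoint sets $R$ (residents) and $H$ (hospitals), a positive integer quota $q_h$ for each $h\in H$, for each $r\in R$ a preference list of $r$ (a sequence of distinct members of $H$, not necessarily all), and for each $h\in H$ a preference list of $h$ (a sequence of distinct members of $R$). A list is complete if it contains every member of the opposite side; an instance is hospital-complete if every hospital's list is complete. A match is a pair $(r,h)\in R\times H$. For a set $M$ of matches, $\mathrm{res}_h M=\{r:(r,h)\in M\}$, $\mathrm{res}\,M=\{r:(r,h)\in M\text{ for some }h\}$. $J$ is an extension of $I$ (same $R,H$, quotas) if every list of $J$ has the corresponding list of $I$ as a prefix. An event is $(r,h)^+$ (proposal) or $(r,h)^-$ (rejection). For an event sequence $\sigma$, $\mathrm{prop}(\sigma)$, $\mathrm{rej}(\sigma)$ are the sets of matches proposed/rejected in $\sigma$ and $\mathrm{tent}(\sigma)=\mathrm{prop}(\sigma)\setminus\mathrm{rej}(\sigma)$. A match $(r,h)\in M$ is ousted from $M$ in $I$ if the list of $h$ in $I$ contains at least $q_h$ residents of $\mathrm{res}_h M$ and either $r$ is not on it or $r$ is preceded on it by at least $q_h$ residents of $\mathrm{res}_h M$. $I$-feasible sequences: the empty sequence is $I$-feasible;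 if $\sigma$ is $I$-feasible then $\sigma+(r,h)^+$ is $I$-feasible if $r\notin\mathrm{res}\,\mathrm{tent}(\sigma)$, $(r,h)\notin\mathrm{prop}(\sigma)$, $h$ is on the list of $r$ in $I$ and $(r,h')\in\mathrm{rej}(\sigma)$ for every $h'$ preceding $h$ on it; and $\sigma+(r,h)^-$ is $I$-feasible if $(r,h)$ is ousted from $\mathrm{prop}(\sigma)$ in $I$ and $(r,h)\notin\mathrm{rej}(\sigma)$. All maximal $I$-feasible sequences contain the same events; $\mathrm{prop}(I),\mathrm{rej}(I),\mathrm{tent}(I)$ denote $\mathrm{prop}(\sigma),\mathrm{rej}(\sigma),\mathrm{tent}(\sigma)$ for any maximal $I$-feasible $\sigma$. $I$ is resident-minimal if $\mathrm{prop}(I)$ equals the set of matches $(r,h)$ with $h$ on the list of $r$ in $I$. An extension $J$ of $I$ is simple if $(\mathrm{prop}(J)\setminus\mathrm{prop}(I))\cap(\mathrm{rej}(J)\setminus\mathrm{rej}(I))=\emptyset$. For a resident-minimal and hospital-complete instance $I$, a prescription for $I$ is a pair $(P,X)$ of sets of matches such that: (P1) $P\cap\mathrm{prop}(I)=\emptyset$; (P2) for each $r\in R$ there is at most one $h$ with $(r,h)\in P$; (P3) $X\subseteq\mathrm{tent}(I)$; (P4) $\mathrm{res}\,P\cap\mathrm{res}\,\mathrm{tent}(I)\subseteq\mathrm{res}\,X$; (P5) for each $h\in H$, $|\mathrm{res}_h(P\cup(\mathrm{tent}(I)\setminus X))|\le q_h$, with equality if $\mathrm{res}_h X\neq\emptyset$;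 (P6) for each $h\in H$, every member of $\mathrm{res}_h(P\cup(\mathrm{tent}(I)\setminus X))$ precedes all members of $\mathrm{res}_h X$ in the list of $h$ in $I$. Its target set is $\mathrm{tgs}(P,X)=\{(r,h)\in X: r\notin\mathrm{res}\,P\}$. *)

theory Defs
  imports Main
begin

text \<open>Residents and hospitals live in two separate types (so R and H are automatically disjoint).\<close>

record ('r, 'h) inst =
  Res   :: "'r set"
  Hos   :: "'h set"
  quota :: "'h \<Rightarrow> nat"
  rpref :: "'r \<Rightarrow> 'h list"
  hpref :: "'h \<Rightarrow> 'r list"

definition valid_instance :: "('r, 'h) inst \<Rightarrow> bool" where
  "valid_instance I \<longleftrightarrow>
     finite (Res I) \<and> finite (Hos I) \<and>
     (\<forall>h\<in>Hos I. quota I h > 0) \<and>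
     (\<forall>r\<in>Res I. distinct (rpref I r) \<and> set (rpref I r) \<subseteq> Hos I) \<and>
     (\<forall>h\<in>Hos I. distinct (hpref I h) \<and> set (hpref I h) \<subseteq> Res I) \<and>
     (\<forall>r. r \<notin> Res I \<longrightarrow> rpref I r = []) \<and>
     (\<forall>h. h \<notin> Hos I \<longrightarrow> hpref I h = [])"

definition hospital_complete :: "('r, 'h) inst \<Rightarrow> bool" where
  "hospital_complete I \<longleftrightarrow> (\<forall>h\<in>Hos I. set (hpref I h) = Res I)"

definition is_extension :: "('r, 'h) inst \<Rightarrow> ('r, 'h) inst \<Rightarrow> bool" where
  "is_extension I J \<longleftrightarrow> valid_instance J \<and>
     Res J = Res I \<and> Hos J = Hos I \<and> (\<forall>h\<in>Hos I. quota J h = quota I h) \<and>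
     (\<forall>r\<in>Res I. \<exists>ys. rpref J r = rpref I r @ ys) \<and>
     (\<forall>h\<in>Hos I. \<exists>ys. hpref J h = hpref I h @ ys)"

definition res_h :: "'h \<Rightarrow> ('r \<times> 'h) set \<Rightarrow> 'r set" where
  "res_h h M = {r. (r, h) \<in> M}"

definition res :: "('r \<times> 'h) set \<Rightarrow> 'r set" where
  "res M = {r. \<exists>h. (r, h) \<in> M}"

definition precedes :: "'a list \<Rightarrow> 'a \<Rightarrow> 'a \<Rightarrow> bool" where
  "precedes L a b \<longleftrightarrow> (\<exists>i j. i < j \<and> j < length L \<and> L ! i = a \<and> L ! j = b)"

datatype ('r, 'h) event = Propose 'r 'h | Reject 'r 'h

definition props :: "('r, 'h) event list \<Rightarrow> ('r \<times> 'h) set" where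
  "props \<sigma> = {(r, h). Propose r h \<in> set \<sigma>}"

definition rejs :: "('r, 'h) event list \<Rightarrow> ('r \<times> 'h) set" where
  "rejs \<sigma> = {(r, h). Reject r h \<in> set \<sigma>}"

definition tents :: "('r, 'h) event list \<Rightarrow> ('r \<times> 'h) set" where
  "tents \<sigma> = props \<sigma> - rejs \<sigma>"

definition ousted :: "('r, 'h) inst \<Rightarrow> ('r \<times> 'h) set \<Rightarrow> 'r \<Rightarrow> 'h \<Rightarrow> bool" where
  "ousted I M r h \<longleftrightarrow>
     (r, h) \<in> M \<and>
     card (set (hpref I h) \<inter> res_h h M) \<ge> quota I h \<and>
     (r \<notin> set (hpref I h) \<or>
      card {x \<in> res_h h M. precedes (hpref I h) x r} \<ge> quota I h)"

inductive feasible :: "('r, 'h) inst \<Rightarrow> ('r, 'h) event list \<Rightarrow> bool" for I where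
  feasible_Nil: "feasible I []"
| feasible_Prop: "\<lbrakk> feasible I \<sigma>; r \<notin> res (tents \<sigma>); (r, h) \<notin> props \<sigma>;
                    h \<in> set (rpref I r);
                    \<forall>h'. precedes (rpref I r) h' h \<longrightarrow> (r, h') \<in> rejs \<sigma> \<rbrakk>
                  \<Longrightarrow> feasible I (\<sigma> @ [Propose r h])"
| feasible_Rej: "\<lbrakk> feasible I \<sigma>; ousted I (props \<sigma>) r h; (r, h) \<notin> rejs \<sigma> \<rbrakk>
                  \<Longrightarrow> feasible I (\<sigma> @ [Reject r h])"

definition maximal_feasible :: "('r, 'h) inst \<Rightarrow> ('r, 'h) event list \<Rightarrow> bool" where
  "maximal_feasible I \<sigma> \<longleftrightarrow> feasible I \<sigma> \<and> (\<forall>e. \<not> feasible I (\<sigma> @ [e]))"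

text \<open>All maximal I-feasible sequences contain the same events (a fact from the paper);
  prop(I), rej(I), tent(I) are taken from an arbitrary maximal one.\<close>
definition some_max :: "('r, 'h) inst \<Rightarrow> ('r, 'h) event list" where
  "some_max I = (SOME \<sigma>. maximal_feasible I \<sigma>)"

definition propI :: "('r, 'h) inst \<Rightarrow> ('r \<times> 'h) set" where
  "propI I = props (some_max I)"

definition rejI :: "('r, 'h) inst \<Rightarrow> ('r \<times> 'h) set" where
  "rejI I = rejs (some_max I)"

definition tentI :: "('r, 'h) inst \<Rightarrow> ('r \<times> 'h) set" where
  "tentI I = tents (some_max I)"

definition resident_minimal :: "('r, 'h) inst \<Rightarrow> bool" where
  "resident_minimal I \<longleftrightarrow> propI I = {(r, h). h \<in> set (rpref I r)}"

definition simple_extension :: "('r, 'h) inst \<Rightarrow> ('r, 'h) inst \<Rightarrow> bool" where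
  "simple_extension I J \<longleftrightarrow> is_extension I J \<and>
     (propI J - propI I) \<inter> (rejI J - rejI I) = {}"

definition prescription :: "('r, 'h) inst \<Rightarrow> ('r \<times> 'h) set \<Rightarrow> ('r \<times> 'h) set \<Rightarrow> bool" where
  "prescription I P X \<longleftrightarrow>
     P \<subseteq> Res I \<times> Hos I \<and> X \<subseteq> Res I \<times> Hos I \<and>
     P \<inter> propI I = {} \<and>
     (\<forall>r h h'. (r, h) \<in> P \<and> (r, h') \<in> P \<longrightarrow> h = h') \<and>
     X \<subseteq> tentI I \<and>
     res P \<inter> res (tentI I) \<subseteq> res X \<and>
     (\<forall>h\<in>Hos I. card (res_h h (P \<union> (tentI I - X))) \<le> quota I h \<and>
                 (res_h h X \<noteq> {} \<longrightarrow> card (res_h h (P \<union> (tentI I - X))) = quota I h)) \<and>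
     (\<forall>h\<in>Hos I. \<forall>a\<in>res_h h (P \<union> (tentI I - X)). \<forall>b\<in>res_h h X.
                 precedes (hpref I h) a b)"

definition tgs :: "('r \<times> 'h) set \<Rightarrow> ('r \<times> 'h) set \<Rightarrow> ('r \<times> 'h) set" where
  "tgs P X = {(r, h) \<in> X. r \<notin> res P}"

end

theory Submission
  imports Defs
begin

text \<open>
  Let J be I with the P-hospital of each resident of res P appended to his list. Since J differs
  from I only in resident lists, every I-feasible sequence is subsumed by a maximal J-feasible
  one, so J proposes and rejects everything I does. Conversely, (P5) and (P6) place the residents
  of P and of tent(I) - X within the quota of each hospital, ahead of X and of everyone rejected
  in I; hence no other match is ever ousted, and beyond I the extension J only proposes matches
  of P and only rejects matches of X.

  For the targets, fix a hospital h with an unrejected X-match and let x be the last such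
  resident on its list. As (x, h) is not ousted, fewer than q(h) proposers of h precede x. They
  include the proposed part of P \<union> (tent(I) - X) at h, of size q(h) minus the number of
  unproposed P-matches at h by (P5), and the other unrejected X-matches at h. Summing over
  hospitals, there are at most as many unrejected X-matches as unproposed P-matches. But a
  resident with an unproposed P-match is still held by his match of tent(I), which lies in X by
  (P4). Hence every unrejected X-match belongs to a resident of P: all targets are rejected.
\<close>

lemma precedes_mem: "precedes L a b \<Longrightarrow> a \<in> set L \<and> b \<in> set L"
  unfolding precedes_def by auto

lemma precedes_irrefl: "distinct L \<Longrightarrow> \<not> precedes L a a"
  unfolding precedes_def using nth_eq_iff_index_eq by fastforce

lemma precedes_trans:
  assumes "distinct L" "precedes L a b" "precedes L b c"
  shows "precedes L a c"
proof -
  obtain i j where ij: "i < j" "j < length L" "L ! i = a" "L ! j = b"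
    using assms(2) unfolding precedes_def by blast
  obtain i' j' where ij': "i' < j'" "j' < length L" "L ! i' = b" "L ! j' = c"
    using assms(3) unfolding precedes_def by blast
  have "j = i'"
    using nth_eq_iff_index_eq[OF assms(1), of j i'] ij ij' by auto
  then show ?thesis
    using ij ij' unfolding precedes_def by (intro exI[of _ i] exI[of _ j']) auto
qed

lemma precedes_asym: "distinct L \<Longrightarrow> precedes L a b \<Longrightarrow> \<not> precedes L b a"
  using precedes_trans precedes_irrefl by metis

lemma precedes_total:
  "a \<in> set L \<Longrightarrow> b \<in> set L \<Longrightarrow> a \<noteq> b \<Longrightarrow> precedes L a b \<or> precedes L b a"
  unfolding precedes_def in_set_conv_nth by (metis linorder_neqE_nat)

lemma precedes_append_cancel:
  assumes d: "distinct (xs @ ys)" and b: "b \<in> set xs" and p: "precedes (xs @ ys) a b"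
  shows "precedes xs a b"
proof -
  obtain i j where ij: "i < j" "j < length (xs @ ys)" "(xs @ ys) ! i = a" "(xs @ ys) ! j = b"
    using p unfolding precedes_def by blast
  obtain k where k: "k < length xs" "xs ! k = b"
    using b by (auto simp: in_set_conv_nth)
  have "j = k"
    using nth_eq_iff_index_eq[OF d, of j k] ij k by (auto simp: nth_append)
  then show ?thesis
    using ij k unfolding precedes_def by (intro exI[of _ i] exI[of _ j]) (auto simp: nth_append)
qed

lemma ex_last_in_list:
  assumes "A \<subseteq> set L" "A \<noteq> {}"
  shows "\<exists>x\<in>A. \<forall>y\<in>A. y \<noteq> x \<longrightarrow> precedes L y x"
proof -
  let ?K = "{k. k < length L \<and> L ! k \<in> A}"
  have index: "\<exists>k\<in>?K. L ! k = y" if "y \<in> A" for y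
  proof -
    have "y \<in> set L"
      using assms(1) that by blast
    then obtain k where "k < length L" "L ! k = y"
      unfolding in_set_conv_nth by blast
    then show ?thesis
      using that by blast
  qed
  have "finite ?K"
    by simp
  moreover have "?K \<noteq> {}"
    using index assms(2) by blast
  ultimately have "Max ?K \<in> ?K" and i_max: "\<And>k. k \<in> ?K \<Longrightarrow> k \<le> Max ?K"
    using Max_in Max_ge by blast+
  moreover have "precedes L y (L ! Max ?K)" if y: "y \<in> A" "y \<noteq> L ! Max ?K" for y
  proof -
    obtain k where k: "k \<in> ?K" "L ! k = y"
      using index[OF y(1)] by blast
    then have "k < Max ?K"
      using le_neq_implies_less[OF i_max[OF k(1)]] y(2) k(2) by blast
    then show ?thesis
      using k \<open>Max ?K \<in> ?K\<close> unfolding precedes_def by blast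
  qed
  ultimately show ?thesis
    by blast
qed

lemma card_eq_sum_card_res_h:
  assumes "finite H" "B \<subseteq> A \<times> H" "finite B"
  shows "card B = (\<Sum>h\<in>H. card (res_h h B))"
proof -
  have "prod.swap ` B = (SIGMA h:H. res_h h B)"
    using assms(2) unfolding res_h_def by (auto intro: rev_image_eqI)
  moreover have "finite (res_h h B)" for h
  proof (rule finite_subset)
    show "res_h h B \<subseteq> fst ` B"
      unfolding res_h_def by (auto intro: rev_image_eqI)
  qed (use assms(3) in simp)
  ultimately show ?thesis
    using card_SigmaI[OF assms(1), of "\<lambda>h. res_h h B"] card_image[OF inj_swap, of B] by simp
qed

lemma props_snoc_Propose [simp]: "props (\<sigma> @ [Propose r h]) = insert (r, h) (props \<sigma>)"
  and props_snoc_Reject [simp]: "props (\<sigma> @ [Reject r h]) = props \<sigma>"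
  and rejs_snoc_Propose [simp]: "rejs (\<sigma> @ [Propose r h]) = rejs \<sigma>"
  and rejs_snoc_Reject [simp]: "rejs (\<sigma> @ [Reject r h]) = insert (r, h) (rejs \<sigma>)"
  and props_Nil [simp]: "props [] = {}"
  and rejs_Nil [simp]: "rejs [] = {}"
  unfolding props_def rejs_def by auto

lemma valid_distinct_hpref: "valid_instance K \<Longrightarrow> distinct (hpref K h)"
  unfolding valid_instance_def by (cases "h \<in> Hos K") auto

lemma valid_distinct_rpref: "valid_instance K \<Longrightarrow> distinct (rpref K r)"
  unfolding valid_instance_def by (cases "r \<in> Res K") auto

lemma maximal_feasibleD:
  "maximal_feasible K \<sigma> \<Longrightarrow> feasible K \<sigma>"
  "maximal_feasible K \<sigma> \<Longrightarrow> \<not> feasible K (\<sigma> @ [e])"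
  unfolding maximal_feasible_def by blast+

lemma feasible_rejs_subset_props: "feasible K \<sigma> \<Longrightarrow> rejs \<sigma> \<subseteq> props \<sigma>"
  by (induction rule: feasible.induct) (auto simp: ousted_def)

lemma feasible_tents_unique:
  "feasible K \<sigma> \<Longrightarrow> (r, h) \<in> tents \<sigma> \<Longrightarrow> (r, h') \<in> tents \<sigma> \<Longrightarrow> h = h'"
  by (induction arbitrary: r h h' rule: feasible.induct) (auto simp: tents_def res_def)

lemma feasible_props_in_rpref: "feasible K \<sigma> \<Longrightarrow> (r, h) \<in> props \<sigma> \<Longrightarrow> h \<in> set (rpref K r)"
  by (induction arbitrary: r h rule: feasible.induct) auto

lemma feasible_props_subset:
  "valid_instance K \<Longrightarrow> feasible K \<sigma> \<Longrightarrow> props \<sigma> \<subseteq> Res K \<times> Hos K"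
  using feasible_props_in_rpref unfolding valid_instance_def by fastforce

lemma feasible_rejs_before_props:
  "feasible K \<sigma> \<Longrightarrow> (r, h) \<in> props \<sigma> \<Longrightarrow> precedes (rpref K r) h' h \<Longrightarrow> (r, h') \<in> rejs \<sigma>"
  by (induction arbitrary: r h h' rule: feasible.induct) auto

lemma feasible_distinct: "feasible K \<sigma> \<Longrightarrow> distinct \<sigma>"
  by (induction rule: feasible.induct) (auto simp: props_def rejs_def)

lemma feasible_events_subset:
  "feasible K \<sigma> \<Longrightarrow> set \<sigma> \<subseteq> (\<lambda>(r, h). Propose r h) ` {(r, h). h \<in> set (rpref K r)}
                                \<union> (\<lambda>(r, h). Reject r h) ` {(r, h). h \<in> set (rpref K r)}"
proof (induction rule: feasible.induct)
  case (feasible_Rej \<sigma> r h)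
  then have "h \<in> set (rpref K r)"
    using feasible_props_in_rpref[OF feasible_Rej(1)] by (auto simp: ousted_def)
  then show ?case
    using feasible_Rej by auto
qed auto

lemma ex_maximal_feasible:
  assumes v: "valid_instance K"
  shows "\<exists>\<sigma>. maximal_feasible K \<sigma>"
proof -
  let ?A = "{(r, h). h \<in> set (rpref K r)}"
  let ?E = "(\<lambda>(r, h). Propose r h) ` ?A \<union> (\<lambda>(r, h). Reject r h) ` ?A"
  have "?A \<subseteq> Res K \<times> Hos K"
    using v unfolding valid_instance_def by fastforce
  then have "finite ?A"
    using v finite_subset[OF _ finite_cartesian_product] unfolding valid_instance_def by blast
  then have fin_E: "finite ?E"
    by blast
  have bounded: "length \<sigma> \<le> card ?E" if "feasible K \<sigma>" for \<sigma>
  proof -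
    have "length \<sigma> = card (set \<sigma>)"
      using distinct_card[OF feasible_distinct[OF that]] by simp
    also have "\<dots> \<le> card ?E"
      using card_mono[OF fin_E feasible_events_subset[OF that]] .
    finally show ?thesis .
  qed
  then have "\<forall>\<tau>. feasible K \<tau> \<longrightarrow> length \<tau> < Suc (card ?E)"
    by (simp add: le_imp_less_Suc)
  then obtain \<sigma> where \<sigma>: "feasible K \<sigma>"
    and longest: "\<forall>\<tau>. feasible K \<tau> \<longrightarrow> length \<tau> \<le> length \<sigma>"
    using ex_has_greatest_nat[where P = "feasible K" and f = length, OF feasible_Nil] by blast
  moreover have "\<not> feasible K (\<sigma> @ [e])" for e
    using longest by fastforce
  ultimately show ?thesis
    unfolding maximal_feasible_def by blast
qed

lemma maximal_feasible_some_max: "valid_instance K \<Longrightarrow> maximal_feasible K (some_max K)"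
  unfolding some_max_def using ex_maximal_feasible by (rule someI_ex)

lemma maximal_ousted_in_rejs:
  assumes "maximal_feasible K \<sigma>" "ousted K (props \<sigma>) r h"
  shows "(r, h) \<in> rejs \<sigma>"
  using feasible_Rej[OF maximal_feasibleD(1)[OF assms(1)] assms(2)] maximal_feasibleD(2)[OF assms(1)]
  by blast

lemma maximal_props_after_rejs:
  assumes m: "maximal_feasible K \<sigma>" and h: "h \<in> set (rpref K r)"
    and rejected: "\<And>h'. precedes (rpref K r) h' h \<Longrightarrow> (r, h') \<in> rejs \<sigma>"
  shows "(r, h) \<in> props \<sigma>"
proof (rule ccontr)
  assume not_proposed: "(r, h) \<notin> props \<sigma>"
  have f: "feasible K \<sigma>"
    using maximal_feasibleD(1)[OF m] .
  show False
  proof (cases "r \<in> res (tents \<sigma>)")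
    case False
    have "feasible K (\<sigma> @ [Propose r h])"
      using feasible_Prop[OF f False not_proposed h] rejected by blast
    then show False
      using maximal_feasibleD(2)[OF m] by blast
  next
    case True
    then obtain h'' where "(r, h'') \<in> tents \<sigma>"
      unfolding res_def by blast
    then have h'': "(r, h'') \<in> props \<sigma>" "(r, h'') \<notin> rejs \<sigma>" "h'' \<noteq> h"
      using not_proposed unfolding tents_def by auto
    then consider "precedes (rpref K r) h h''" | "precedes (rpref K r) h'' h"
      using precedes_total[OF h feasible_props_in_rpref[OF f h''(1)]] by blast
    then show False
    proof cases
      case 1
      then show False
        using feasible_rejs_before_props[OF f h''(1)] feasible_rejs_subset_props[OF f] not_proposed
        by blast
    next
      case 2
      then show False
        using rejected h''(2) by blast
    qed
  qed
qed

lemma tentI_eq: "tentI K = propI K - rejI K"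
  unfolding tentI_def propI_def rejI_def tents_def ..

lemma finite_precedes: "finite {x \<in> A. precedes L x b}"
  by (rule finite_subset[of _ "set L"]) (auto dest: precedes_mem)

lemma ousted_mono:
  assumes "ousted K M r h" "M \<subseteq> M'"
  shows "ousted K M' r h"
proof -
  have "set (hpref K h) \<inter> res_h h M \<subseteq> set (hpref K h) \<inter> res_h h M'"
    and "{x \<in> res_h h M. precedes (hpref K h) x r} \<subseteq> {x \<in> res_h h M'. precedes (hpref K h) x r}"
    using assms(2) unfolding res_h_def by auto
  then have "card (set (hpref K h) \<inter> res_h h M) \<le> card (set (hpref K h) \<inter> res_h h M')"
    and "card {x \<in> res_h h M. precedes (hpref K h) x r} \<le> card {x \<in> res_h h M'. precedes (hpref K h) x r}"
    by (simp_all add: card_mono finite_precedes)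
  then show ?thesis
    using assms unfolding ousted_def by auto
qed

section \<open>Rejections in hospital-complete instances\<close>

definition tents_before :: "('r, 'h) inst \<Rightarrow> ('r, 'h) event list \<Rightarrow> 'h \<Rightarrow> 'r \<Rightarrow> 'r set" where
  "tents_before K \<sigma> h s = {t \<in> res_h h (tents \<sigma>). precedes (hpref K h) t s}"

lemma finite_tents_before: "finite (tents_before K \<sigma> h s)"
  by (rule finite_subset[of _ "set (hpref K h)"]) (auto simp: tents_before_def dest: precedes_mem)

lemma ousted_quota_le_card_tents_before:
  assumes v: "valid_instance K" and hc: "hospital_complete K" and f: "feasible K \<sigma>"
    and rejected: "\<And>s h. (s, h) \<in> rejs \<sigma> \<Longrightarrow> quota K h \<le> card (tents_before K \<sigma> h s)"
    and o: "ousted K (props \<sigma>) r h"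
  shows "quota K h \<le> card (tents_before K \<sigma> h r)"
proof (cases "\<exists>x. precedes (hpref K h) x r \<and> (x, h) \<in> rejs \<sigma>")
  case True
  then obtain x where x: "precedes (hpref K h) x r" "(x, h) \<in> rejs \<sigma>"
    by blast
  have "tents_before K \<sigma> h x \<subseteq> tents_before K \<sigma> h r"
    unfolding tents_before_def using precedes_trans[OF valid_distinct_hpref[OF v] _ x(1)] by blast
  then show ?thesis
    using rejected[OF x(2)] card_mono[OF finite_tents_before] by (meson order_trans)
next
  case False
  have "(r, h) \<in> props \<sigma>"
    using o unfolding ousted_def by simp
  then have "r \<in> set (hpref K h)"
    using feasible_props_subset[OF v f] hc unfolding hospital_complete_def by auto
  then have "quota K h \<le> card {x \<in> res_h h (props \<sigma>). precedes (hpref K h) x r}"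
    using o unfolding ousted_def by auto
  moreover have "{x \<in> res_h h (props \<sigma>). precedes (hpref K h) x r} \<subseteq> tents_before K \<sigma> h r"
    using False unfolding tents_before_def res_h_def tents_def by auto
  ultimately show ?thesis
    using card_mono[OF finite_tents_before] by (meson order_trans)
qed

lemma feasible_rejs_quota_le_card_tents_before:
  assumes v: "valid_instance K" and hc: "hospital_complete K"
  shows "feasible K \<sigma> \<Longrightarrow> (s, h) \<in> rejs \<sigma> \<Longrightarrow> quota K h \<le> card (tents_before K \<sigma> h s)"
proof (induction arbitrary: s h rule: feasible.induct)
  case feasible_Nil
  then show ?case by simp
next
  case (feasible_Prop \<sigma> r0 h0)
  have "tents_before K \<sigma> h s \<subseteq> tents_before K (\<sigma> @ [Propose r0 h0]) h s"
    unfolding tents_before_def res_h_def tents_def by auto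
  moreover have "(s, h) \<in> rejs \<sigma>"
    using feasible_Prop.prems by simp
  ultimately show ?case
    using feasible_Prop.IH card_mono[OF finite_tents_before] by (meson order_trans)
next
  case (feasible_Rej \<sigma> r0 h0)
  have d: "distinct (hpref K h)"
    using valid_distinct_hpref[OF v] .
  have r0: "quota K h0 \<le> card (tents_before K \<sigma> h0 r0)"
    using ousted_quota_le_card_tents_before[OF v hc feasible_Rej.hyps(1) feasible_Rej.IH feasible_Rej.hyps(2)] .
  have before_snoc: "tents_before K (\<sigma> @ [Reject r0 h0]) h s
      = tents_before K \<sigma> h s - (if h = h0 then {r0} else {})"
    unfolding tents_before_def res_h_def tents_def by auto
  consider "(s, h) = (r0, h0)" | "h = h0" "precedes (hpref K h) r0 s"
    | "(s, h) \<in> rejs \<sigma>" "h \<noteq> h0 \<or> \<not> precedes (hpref K h) r0 s"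
    using feasible_Rej.prems by auto
  then show ?case
  proof cases
    case 1
    then have "tents_before K (\<sigma> @ [Reject r0 h0]) h s = tents_before K \<sigma> h0 r0"
      using before_snoc precedes_irrefl[OF d] unfolding tents_before_def by auto
    then show ?thesis
      using r0 1 by simp
  next
    case 2
    then have "tents_before K \<sigma> h0 r0 \<subseteq> tents_before K (\<sigma> @ [Reject r0 h0]) h s"
      unfolding before_snoc unfolding tents_before_def
      using precedes_trans[OF d] precedes_irrefl[OF d] by auto
    then show ?thesis
      using r0 2 card_mono[OF finite_tents_before] by (meson order_trans)
  next
    case 3
    then have "tents_before K (\<sigma> @ [Reject r0 h0]) h s = tents_before K \<sigma> h s"
      unfolding before_snoc unfolding tents_before_def by auto
    then show ?thesis
      using feasible_Rej.IH 3 by simp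
  qed
qed

lemma maximal_card_before_tent_lt_quota:
  assumes m: "maximal_feasible K \<sigma>" and t: "(t, h) \<in> tents \<sigma>" and t_h: "t \<in> set (hpref K h)"
  shows "card {x \<in> res_h h (props \<sigma>). precedes (hpref K h) x t} < quota K h"
proof -
  let ?Q = "{x \<in> res_h h (props \<sigma>). precedes (hpref K h) x t}"
  have "\<not> ousted K (props \<sigma>) t h"
    using maximal_ousted_in_rejs[OF m] t unfolding tents_def by blast
  moreover have "card ?Q \<le> card (set (hpref K h) \<inter> res_h h (props \<sigma>))"
    by (rule card_mono) (auto dest: precedes_mem)
  ultimately show ?thesis
    using t t_h unfolding ousted_def tents_def by auto
qed

lemma maximal_tents_precede_rejs:
  assumes v: "valid_instance K" and hc: "hospital_complete K" and m: "maximal_feasible K \<sigma>"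
    and t: "(t, h) \<in> tents \<sigma>" and s: "(s, h) \<in> rejs \<sigma>"
  shows "precedes (hpref K h) t s"
proof (rule ccontr)
  assume not_before: "\<not> precedes (hpref K h) t s"
  have f: "feasible K \<sigma>"
    using maximal_feasibleD(1)[OF m] .
  have "(t, h) \<in> props \<sigma>" "(s, h) \<in> props \<sigma>" "t \<noteq> s"
    using t s feasible_rejs_subset_props[OF f] unfolding tents_def by auto
  moreover have "props \<sigma> \<subseteq> Res K \<times> Hos K"
    using feasible_props_subset[OF v f] .
  ultimately have t_h: "t \<in> set (hpref K h)" and s_h: "s \<in> set (hpref K h)" and "t \<noteq> s"
    using hc unfolding hospital_complete_def by auto
  then have st: "precedes (hpref K h) s t"
    using precedes_total[OF t_h s_h] not_before by blast
  have "tents_before K \<sigma> h s \<subseteq> {x \<in> res_h h (props \<sigma>). precedes (hpref K h) x t}"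
  proof
    fix x
    assume "x \<in> tents_before K \<sigma> h s"
    then have "(x, h) \<in> props \<sigma>" "precedes (hpref K h) x s"
      unfolding tents_before_def res_h_def tents_def by auto
    then show "x \<in> {x \<in> res_h h (props \<sigma>). precedes (hpref K h) x t}"
      using precedes_trans[OF valid_distinct_hpref[OF v] _ st] unfolding res_h_def by blast
  qed
  then have "card (tents_before K \<sigma> h s) \<le> card {x \<in> res_h h (props \<sigma>). precedes (hpref K h) x t}"
    by (rule card_mono[OF finite_precedes])
  then show False
    using feasible_rejs_quota_le_card_tents_before[OF v hc f s]
      maximal_card_before_tent_lt_quota[OF m t t_h] by linarith
qed

lemma tentI_precedes_rejI:
  assumes "valid_instance K" "hospital_complete K" "(t, h) \<in> tentI K" "(s, h) \<in> rejI K"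
  shows "precedes (hpref K h) t s"
  using maximal_tents_precede_rejs[OF assms(1,2) maximal_feasible_some_max[OF assms(1)]] assms(3,4)
  unfolding tentI_def rejI_def .

lemma rejI_quota_le_card_tentI:
  assumes v: "valid_instance K" and hc: "hospital_complete K" and s: "(s, h) \<in> rejI K"
  shows "quota K h \<le> card (res_h h (tentI K))"
proof -
  have f: "feasible K (some_max K)"
    using maximal_feasibleD(1)[OF maximal_feasible_some_max[OF v]] .
  have "res_h h (tentI K) \<subseteq> Res K"
    using feasible_props_subset[OF v f] unfolding res_h_def tentI_def tents_def by auto
  then have "finite (res_h h (tentI K))"
    using v finite_subset unfolding valid_instance_def by blast
  moreover have "tents_before K (some_max K) h s \<subseteq> res_h h (tentI K)"
    unfolding tents_before_def tentI_def by auto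
  ultimately show ?thesis
    using feasible_rejs_quota_le_card_tents_before[OF v hc f] s card_mono
    unfolding rejI_def by (meson order_trans)
qed

lemma feasible_subsumed_by_maximal_extension:
  assumes vJ: "valid_instance J"
    and quota: "quota J = quota I" and hpref: "hpref J = hpref I"
    and prefix: "\<And>r. \<exists>ys. rpref J r = rpref I r @ ys"
    and m: "maximal_feasible J \<sigma>"
  shows "feasible I \<tau> \<Longrightarrow> props \<tau> \<subseteq> props \<sigma> \<and> rejs \<tau> \<subseteq> rejs \<sigma>"
proof (induction rule: feasible.induct)
  case feasible_Nil
  then show ?case by simp
next
  case (feasible_Prop \<tau> r h)
  obtain ys where ys: "rpref J r = rpref I r @ ys"
    using prefix by blast
  have "(r, h) \<in> props \<sigma>"
  proof (rule maximal_props_after_rejs[OF m])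
    show "h \<in> set (rpref J r)"
      using ys feasible_Prop.hyps(4) by simp
    fix h'
    assume "precedes (rpref J r) h' h"
    then have "precedes (rpref I r) h' h"
      using precedes_append_cancel[of "rpref I r" ys] valid_distinct_rpref[OF vJ, of r] ys
        feasible_Prop.hyps(4) by simp
    then show "(r, h') \<in> rejs \<sigma>"
      using feasible_Prop.hyps(5) feasible_Prop.IH by blast
  qed
  then show ?case
    using feasible_Prop.IH by simp
next
  case (feasible_Rej \<tau> r h)
  have "ousted J (props \<sigma>) r h"
    using ousted_mono[OF feasible_Rej.hyps(2)] feasible_Rej.IH quota hpref
    unfolding ousted_def by auto
  then show ?case
    using maximal_ousted_in_rejs[OF m] feasible_Rej.IH by simp
qed

section \<open>The extension prescribed by P\<close>

definition prescribed_extension :: "('r, 'h) inst \<Rightarrow> ('r \<times> 'h) set \<Rightarrow> ('r, 'h) inst" where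
  "prescribed_extension I P =
     I\<lparr>rpref := \<lambda>r. rpref I r @ (if r \<in> res P then [SOME h. (r, h) \<in> P] else [])\<rparr>"

locale prescribed =
  fixes I :: "('r, 'h) inst" and P X :: "('r \<times> 'h) set"
  assumes valid: "valid_instance I" and minimal: "resident_minimal I"
    and complete: "hospital_complete I" and prescription: "prescription I P X"
begin

abbreviation J :: "('r, 'h) inst" where
  "J \<equiv> prescribed_extension I P"

abbreviation \<sigma>J :: "('r, 'h) event list" where
  "\<sigma>J \<equiv> some_max J"

abbreviation kept :: "'h \<Rightarrow> 'r set" where
  "kept h \<equiv> res_h h (P \<union> (tentI I - X))"

lemma P_subset: "P \<subseteq> Res I \<times> Hos I"
  and X_subset: "X \<subseteq> Res I \<times> Hos I"
  and P_disjoint_propI: "P \<inter> propI I = {}"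
  and P_unique: "(r, h) \<in> P \<Longrightarrow> (r, h') \<in> P \<Longrightarrow> h = h'"
  and X_subset_tentI: "X \<subseteq> tentI I"
  and res_P_tentI_subset_res_X: "res P \<inter> res (tentI I) \<subseteq> res X"
  and card_kept_le_quota: "h \<in> Hos I \<Longrightarrow> card (kept h) \<le> quota I h"
  and card_kept_eq_quota: "h \<in> Hos I \<Longrightarrow> res_h h X \<noteq> {} \<Longrightarrow> card (kept h) = quota I h"
  and kept_precedes_X: "h \<in> Hos I \<Longrightarrow> a \<in> kept h \<Longrightarrow> b \<in> res_h h X \<Longrightarrow> precedes (hpref I h) a b"
  using prescription unfolding prescription_def by blast+

lemma propI_I: "propI I = {(r, h). h \<in> set (rpref I r)}"
  using minimal unfolding resident_minimal_def .

lemma distinct_hpref: "distinct (hpref I h)"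
  using valid_distinct_hpref[OF valid] .

lemma feasible_some_max_I: "feasible I (some_max I)"
  using maximal_feasibleD(1)[OF maximal_feasible_some_max[OF valid]] .

lemma propI_subset: "propI I \<subseteq> Res I \<times> Hos I"
  unfolding propI_def using feasible_props_subset[OF valid feasible_some_max_I] .

lemma finite_res_h:
  assumes "M \<subseteq> Res I \<times> Hos I"
  shows "finite (res_h h M)"
proof (rule finite_subset)
  show "res_h h M \<subseteq> Res I"
    using assms unfolding res_h_def by auto
qed (use valid in \<open>simp add: valid_instance_def\<close>)

lemma finite_kept: "finite (kept h)"
proof (rule finite_res_h)
  show "P \<union> (tentI I - X) \<subseteq> Res I \<times> Hos I"
    using P_subset propI_subset tentI_eq[of I] by blast
qed

lemma X_disjoint_P: "X \<inter> P = {}"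
  using X_subset_tentI tentI_eq[of I] P_disjoint_propI by blast

lemma rpref_J: "rpref J r = rpref I r @ (if r \<in> res P then [SOME h. (r, h) \<in> P] else [])"
  and J_same [simp]: "Res J = Res I" "Hos J = Hos I" "quota J = quota I" "hpref J = hpref I"
  unfolding prescribed_extension_def by simp_all

lemma rpref_J_P: "(r, h) \<in> P \<Longrightarrow> rpref J r = rpref I r @ [h]"
  using P_unique rpref_J[of r] someI[of "\<lambda>h. (r, h) \<in> P" h] unfolding res_def by auto

lemma in_rpref_J_iff: "h \<in> set (rpref J r) \<longleftrightarrow> h \<in> set (rpref I r) \<or> (r, h) \<in> P"
proof (cases "r \<in> res P")
  case True
  then obtain h0 where "(r, h0) \<in> P"
    unfolding res_def by blast
  then show ?thesis
    using rpref_J_P P_unique by auto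
next
  case False
  then show ?thesis
    using rpref_J[of r] unfolding res_def by auto
qed

lemma valid_J: "valid_instance J"
proof -
  have "distinct (rpref J r)" if "r \<in> Res I" for r
  proof (cases "r \<in> res P")
    case True
    then obtain h where "(r, h) \<in> P"
      unfolding res_def by blast
    then show ?thesis
      using valid that rpref_J_P P_disjoint_propI propI_I unfolding valid_instance_def by auto
  next
    case False
    then show ?thesis
      using valid that rpref_J[of r] unfolding valid_instance_def by simp
  qed
  moreover have "set (rpref J r) \<subseteq> Hos I" if "r \<in> Res I" for r
    using in_rpref_J_iff valid that P_subset unfolding valid_instance_def by blast
  moreover have "rpref J r = []" if "r \<notin> Res I" for r
    using valid that P_subset rpref_J[of r] unfolding valid_instance_def res_def by auto
  ultimately show ?thesis
    using valid unfolding valid_instance_def by simp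
qed

lemma extension_J: "is_extension I J"
  unfolding is_extension_def using valid_J rpref_J by auto

lemma maximal_feasible_\<sigma>J: "maximal_feasible J \<sigma>J"
  using maximal_feasible_some_max[OF valid_J] .

lemma feasible_\<sigma>J: "feasible J \<sigma>J"
  using maximal_feasibleD(1)[OF maximal_feasible_\<sigma>J] .

lemma propI_subset_\<sigma>J: "propI I \<subseteq> props \<sigma>J" and rejI_subset_\<sigma>J: "rejI I \<subseteq> rejs \<sigma>J"
  using feasible_subsumed_by_maximal_extension[OF valid_J _ _ _ maximal_feasible_\<sigma>J feasible_some_max_I]
    rpref_J unfolding propI_def rejI_def by auto

subsection \<open>J proposes only within P and rejects only within X\<close>

lemma res_h_X_nonempty:
  assumes r: "(r, h) \<in> P" and s: "(s, h) \<in> rejI I"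
  shows "res_h h X \<noteq> {}"
proof
  assume no_X: "res_h h X = {}"
  have h: "h \<in> Hos I"
    using r P_subset by auto
  have "res_h h (tentI I) \<subseteq> kept h"
    using no_X unfolding res_h_def by auto
  moreover have "r \<in> kept h" "r \<notin> res_h h (tentI I)"
    using r P_disjoint_propI tentI_eq[of I] unfolding res_h_def by auto
  ultimately have "res_h h (tentI I) \<subset> kept h"
    by blast
  then have "card (res_h h (tentI I)) < card (kept h)"
    using psubset_card_mono[OF finite_kept] by blast
  then show False
    using card_kept_le_quota[OF h] rejI_quota_le_card_tentI[OF valid complete s] by linarith
qed

lemma kept_precedes_rejI:
  assumes h: "h \<in> Hos I" and r: "r \<in> kept h" and x: "(x, h) \<in> rejI I"
  shows "precedes (hpref I h) r x"
proof (cases "(r, h) \<in> P")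
  case True
  then obtain y where "(y, h) \<in> X"
    using res_h_X_nonempty[OF _ x] unfolding res_h_def by blast
  then have "precedes (hpref I h) r y" "precedes (hpref I h) y x"
    using kept_precedes_X[OF h r] tentI_precedes_rejI[OF valid complete _ x] X_subset_tentI
    unfolding res_h_def by auto
  then show ?thesis
    using precedes_trans[OF distinct_hpref] by blast
next
  case False
  then show ?thesis
    using r tentI_precedes_rejI[OF valid complete _ x] unfolding res_h_def by auto
qed

lemma before_kept_subset_kept:
  assumes M: "M \<subseteq> propI I \<union> P" and h: "h \<in> Hos I" and r: "r \<in> kept h"
  shows "{x \<in> res_h h M. precedes (hpref I h) x r} \<subseteq> kept h - {r}"
proof
  fix x
  assume "x \<in> {x \<in> res_h h M. precedes (hpref I h) x r}"
  then have xM: "(x, h) \<in> M" and xr: "precedes (hpref I h) x r"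
    unfolding res_h_def by auto
  have "(x, h) \<notin> rejI I" "(x, h) \<notin> X"
    using kept_precedes_rejI[OF h r] kept_precedes_X[OF h r] xr precedes_asym[OF distinct_hpref]
    unfolding res_h_def by blast+
  then have "(x, h) \<in> P \<union> (tentI I - X)"
    using M xM tentI_eq[of I] by blast
  then show "x \<in> kept h - {r}"
    using xr precedes_irrefl[OF distinct_hpref] unfolding res_h_def by auto
qed

lemma not_ousted_outside_rejI_X:
  assumes M: "M \<subseteq> propI I \<union> P" and rh: "(r, h) \<in> M"
    and not_rejI: "(r, h) \<notin> rejI I" and not_X: "(r, h) \<notin> X"
  shows "\<not> ousted I M r h"
proof
  assume o: "ousted I M r h"
  have h: "h \<in> Hos I" and "r \<in> Res I"
    using M rh P_subset propI_subset by auto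
  then have r_h: "r \<in> set (hpref I h)"
    using complete unfolding hospital_complete_def by auto
  have r: "r \<in> kept h"
    using M rh not_rejI not_X tentI_eq[of I] unfolding res_h_def by auto
  have "card {x \<in> res_h h M. precedes (hpref I h) x r} \<le> card (kept h - {r})"
    using card_mono[OF _ before_kept_subset_kept[OF M h r]] finite_kept by blast
  also have "\<dots> < card (kept h)"
    using r finite_kept by (meson card_Diff1_less)
  also have "\<dots> \<le> quota I h"
    using card_kept_le_quota[OF h] .
  finally show False
    using o r_h unfolding ousted_def by auto
qed

lemma feasible_J_within:
  "feasible J \<sigma> \<Longrightarrow> props \<sigma> \<subseteq> propI I \<union> P \<and> rejs \<sigma> \<subseteq> rejI I \<union> X"
proof (induction rule: feasible.induct)
  case feasible_Nil
  then show ?case by simp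
next
  case (feasible_Prop \<sigma> r h)
  then show ?case
    using in_rpref_J_iff propI_I by auto
next
  case (feasible_Rej \<sigma> r h)
  have "ousted I (props \<sigma>) r h"
    using feasible_Rej.hyps(2) unfolding ousted_def by simp
  then have "(r, h) \<in> rejI I \<union> X"
    using not_ousted_outside_rejI_X[of "props \<sigma>" r h] feasible_Rej.IH unfolding ousted_def by blast
  then show ?case
    using feasible_Rej.IH by simp
qed

lemma props_\<sigma>J_within: "props \<sigma>J \<subseteq> propI I \<union> P"
  and rejs_\<sigma>J_within: "rejs \<sigma>J \<subseteq> rejI I \<union> X"
  using feasible_J_within[OF feasible_\<sigma>J] by auto

subsection \<open>Counting unrejected matches of X\<close>

lemma unproposed_P_keeps_X:
  assumes ph: "(p, h) \<in> P" "(p, h) \<notin> props \<sigma>J"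
  shows "\<exists>h'. (p, h') \<in> X - rejs \<sigma>J"
proof -
  have "p \<in> res (tents \<sigma>J)"
  proof (rule ccontr)
    assume free: "p \<notin> res (tents \<sigma>J)"
    have "(p, h') \<in> rejs \<sigma>J" if "precedes (rpref J p) h' h" for h'
    proof -
      have "h' \<in> set (rpref J p)" "h' \<noteq> h"
        using precedes_mem[OF that] precedes_irrefl[OF valid_distinct_rpref[OF valid_J]] that
        by blast+
      then have "h' \<in> set (rpref I p)"
        using in_rpref_J_iff P_unique[OF ph(1)] by blast
      then have "(p, h') \<in> props \<sigma>J"
        using propI_I propI_subset_\<sigma>J by blast
      then show ?thesis
        using free unfolding res_def tents_def by blast
    qed
    then have "(p, h) \<in> props \<sigma>J"
      using maximal_props_after_rejs[OF maximal_feasible_\<sigma>J] in_rpref_J_iff ph(1) by blast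
    then show False
      using ph(2) by blast
  qed
  then obtain h' where h': "(p, h') \<in> tents \<sigma>J"
    unfolding res_def by blast
  then have "(p, h') \<notin> P"
    using ph P_unique unfolding tents_def by blast
  then have "(p, h') \<in> tentI I"
    using h' props_\<sigma>J_within rejI_subset_\<sigma>J tentI_eq[of I] unfolding tents_def by blast
  moreover obtain h'' where h'': "(p, h'') \<in> X"
    using res_P_tentI_subset_res_X calculation ph(1) unfolding res_def by blast
  ultimately have "h'' = h'"
    using feasible_tents_unique[OF feasible_some_max_I] X_subset_tentI unfolding tentI_def by blast
  then show ?thesis
    using h' h'' unfolding tents_def by blast
qed

lemma card_unrejected_X_le_unproposed_P:
  assumes h: "h \<in> Hos I"
  shows "card (res_h h (X - rejs \<sigma>J)) \<le> card (res_h h (P - props \<sigma>J))"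
proof (cases "res_h h (X - rejs \<sigma>J) = {}")
  case False
  let ?S = "res_h h (X - rejs \<sigma>J)" and ?U = "res_h h (P - props \<sigma>J)"
  have S_h: "?S \<subseteq> set (hpref I h)"
    using X_subset complete h unfolding hospital_complete_def res_h_def by auto
  obtain x where x: "x \<in> ?S" and x_last: "\<And>y. y \<in> ?S \<Longrightarrow> y \<noteq> x \<Longrightarrow> precedes (hpref I h) y x"
    using ex_last_in_list[OF S_h False] by blast
  let ?Q = "{y \<in> res_h h (props \<sigma>J). precedes (hpref I h) y x}"
  have "(x, h) \<in> tents \<sigma>J"
    using x X_subset_tentI tentI_eq[of I] propI_subset_\<sigma>J unfolding res_h_def tents_def by auto
  moreover have "x \<in> set (hpref I h)"
    using S_h x by blast
  ultimately have Q_lt: "card ?Q < quota I h"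
    using maximal_card_before_tent_lt_quota[OF maximal_feasible_\<sigma>J] by simp
  have kept_eq: "card (kept h) = quota I h"
    using card_kept_eq_quota[OF h] x unfolding res_h_def by blast
  have U_kept: "?U \<subseteq> kept h"
    unfolding res_h_def by auto
  have "kept h - ?U \<subseteq> ?Q"
    using kept_precedes_X[OF h] x X_subset_tentI tentI_eq[of I] propI_subset_\<sigma>J
    unfolding res_h_def by auto
  moreover have "?S - {x} \<subseteq> ?Q"
    using x_last X_subset_tentI tentI_eq[of I] propI_subset_\<sigma>J unfolding res_h_def by auto
  ultimately have sub: "(kept h - ?U) \<union> (?S - {x}) \<subseteq> ?Q"
    by blast
  have disj: "(kept h - ?U) \<inter> (?S - {x}) = {}"
    using X_disjoint_P X_subset_tentI unfolding res_h_def by auto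
  have fin_S: "finite ?S"
    using finite_res_h X_subset by blast
  have "card (kept h - ?U) + card (?S - {x}) = card ((kept h - ?U) \<union> (?S - {x}))"
    using card_Un_disjoint[OF _ _ disj] finite_kept fin_S by simp
  also have "\<dots> \<le> card ?Q"
    using card_mono[OF finite_precedes sub] .
  finally have "card (kept h - ?U) + card (?S - {x}) \<le> card ?Q" .
  moreover have "card (kept h - ?U) = card (kept h) - card ?U" "card ?U \<le> card (kept h)"
    using card_Diff_subset[OF finite_subset[OF U_kept finite_kept] U_kept]
      card_mono[OF finite_kept U_kept] by simp_all
  moreover have "card (?S - {x}) = card ?S - 1" "card ?S > 0"
    using x fin_S card_gt_0_iff by auto
  ultimately show ?thesis
    using Q_lt kept_eq by linarith
qed simp

lemma unrejected_X_in_res_P: "X - rejs \<sigma>J \<subseteq> {(x, h). x \<in> res P}"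
proof -
  let ?S = "X - rejs \<sigma>J" and ?U = "P - props \<sigma>J"
  let ?S_P = "{(x, h) \<in> ?S. x \<in> res P}"
  have sub: "?S \<subseteq> Res I \<times> Hos I" "?U \<subseteq> Res I \<times> Hos I"
    using X_subset P_subset by blast+
  have "finite (Hos I)" "finite (Res I \<times> Hos I)"
    using valid unfolding valid_instance_def by simp_all
  then have fin: "finite (Hos I)" "finite ?S" "finite ?U"
    using finite_subset[OF sub(1)] finite_subset[OF sub(2)] by simp_all
  have fin_S_P: "finite ?S_P"
    using fin(2) by (rule rev_finite_subset) blast
  have "card ?S = (\<Sum>h\<in>Hos I. card (res_h h ?S))"
    using card_eq_sum_card_res_h[OF fin(1) sub(1) fin(2)] .
  also have "\<dots> \<le> (\<Sum>h\<in>Hos I. card (res_h h ?U))"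
    using card_unrejected_X_le_unproposed_P by (rule sum_mono)
  also have "\<dots> = card ?U"
    using card_eq_sum_card_res_h[OF fin(1) sub(2) fin(3)] by simp
  also have "\<dots> = card (fst ` ?U)"
    using P_unique by (intro card_image[symmetric] inj_onI) auto
  also have "\<dots> \<le> card (fst ` ?S_P)"
  proof (rule card_mono)
    show "finite (fst ` ?S_P)"
      using fin_S_P by simp
    show "fst ` ?U \<subseteq> fst ` ?S_P"
    proof
      fix p
      assume "p \<in> fst ` ?U"
      then obtain h where ph: "(p, h) \<in> P" "(p, h) \<notin> props \<sigma>J"
        by auto
      moreover obtain h' where "(p, h') \<in> ?S"
        using unproposed_P_keeps_X[OF ph] by blast
      ultimately have "(p, h') \<in> ?S_P"
        unfolding res_def by blast
      then show "p \<in> fst ` ?S_P"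
        by (rule image_eqI[rotated]) simp
    qed
  qed
  also have "\<dots> \<le> card ?S_P"
    using card_image_le[OF fin_S_P] .
  finally have "card ?S \<le> card ?S_P" .
  then have "?S_P = ?S"
    using card_seteq[OF fin(2), of ?S_P] by blast
  then show ?thesis
    by blast
qed

lemma propI_J_diff: "propI J - propI I \<subseteq> P"
  using props_\<sigma>J_within unfolding propI_def by blast

lemma rejI_J_diff: "rejI J - rejI I \<subseteq> X"
  using rejs_\<sigma>J_within unfolding rejI_def by blast

lemma simple_extension_J: "simple_extension I J"
  using extension_J propI_J_diff rejI_J_diff X_disjoint_P unfolding simple_extension_def by blast

lemma tgs_subset_rejI_J: "tgs P X \<subseteq> rejI J"
  using unrejected_X_in_res_P unfolding tgs_def rejI_def by blast

end

theorem lemma1: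
  fixes I :: "('r, 'h) inst" and P X :: "('r \<times> 'h) set"
  assumes "valid_instance I"
    and "resident_minimal I"
    and "hospital_complete I"
    and "prescription I P X"
  shows "\<exists>J. simple_extension I J \<and>
             propI J - propI I \<subseteq> P \<and>
             rejI J - rejI I \<subseteq> X \<and>
             tgs P X \<subseteq> rejI J"
proof -
  interpret prescribed I P X
    using assms by unfold_locales
  show ?thesis
    using simple_extension_J propI_J_diff rejI_J_diff tgs_subset_rejI_J by blast
qed

end
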